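(* Let $k$ be an algebraically closed field of characteristic zero and $0<l<n$. Let $Y,Z\subset\mathbb P^n$ be closed subvarieties with saturated homogeneous ideals $I_Y,I_Z\subset k[x_0,\dots,x_n]$, $I_X=I_Y\cap I_Z$, with $Y\subset\{x_0=\cdots=x_{l-1}=0\}$, $Z\subset\{x_{l+1}=\cdots=x_n=0\}$ and $Y\cap Z\neq\emptyset$ (so $Y\cap Z=\{p\}$, $p$ the coordinate point of $x_l$). Fix a monomial order $\prec$ and a positive integer $m$, and let $\Sigma_{X,m}$ be the set of degree-$m$ monomials of $k[x_0,\dots,x_n]$ not in $\mathrm{in}_\prec(I_X)$, $\Sigma_{Y,m}$ the set of degree-$m$ monomials of $k[x_l,\dots,x_n]$ not in $\mathrm{in}_\prec(I_Y\cap k[x_l,\dots,x_n])$, and $\Sigma_{Z,m}$ the set of degree-$m$ monomials of $k[x_0,\dots,x_l]$ not in $\mathrm{in}_\prec(I_Z\cap k[x_0,\dots,x_l])$ (initial ideals of the intersections computed in the respective subrings). Then $\Sigma_{X,m}=\Sigma_{Y,m}\cup\Sigma_{Z,m}$ and $\Sigma_{Y,m}\cap\Sigma_{Z,m}=\{x_l^m\}$. *)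

theory Defs
  imports "HOL-Library.Poly_Mapping" "HOL-Computational_Algebra.Polynomial"
begin

text \<open>Monomials in variables x_0, x_1, ... are finitely supported exponent vectors
  nat =>0 nat; polynomials with coefficients in k are ((nat =>0 nat) =>0 k),
  with the convolution product from Poly_Mapping.\<close>

type_synonym mono = "nat \<Rightarrow>\<^sub>0 nat"
type_synonym 'k mpoly = "mono \<Rightarrow>\<^sub>0 'k"

definition mdeg :: "mono \<Rightarrow> nat" where
  "mdeg a = (\<Sum>i\<in>Poly_Mapping.keys a. Poly_Mapping.lookup a i)"

definition polyring :: "nat set \<Rightarrow> ('k::zero) mpoly set" where
  "polyring V = {f. \<forall>a\<in>Poly_Mapping.keys f. Poly_Mapping.keys a \<subseteq> V}"

definition homogeneous :: "('k::zero) mpoly \<Rightarrow> bool" where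
  "homogeneous f \<longleftrightarrow> (\<exists>d. \<forall>a\<in>Poly_Mapping.keys f. mdeg a = d)"

definition mpoly_eval :: "('k::comm_ring_1) mpoly \<Rightarrow> (nat \<Rightarrow> 'k) \<Rightarrow> 'k" where
  "mpoly_eval f v = (\<Sum>a\<in>Poly_Mapping.keys f. Poly_Mapping.lookup f a * (\<Prod>i\<in>Poly_Mapping.keys a. v i ^ Poly_Mapping.lookup a i))"

text \<open>Points of P^n are represented by their affine cones: nonzero vectors
  v with v i = 0 for i > n.\<close>
definition cone_points :: "nat \<Rightarrow> (nat \<Rightarrow> 'k::zero) set" where
  "cone_points n = {v. (\<forall>i>n. v i = 0) \<and> (\<exists>i\<le>n. v i \<noteq> 0)}"

definition proj_closed :: "nat \<Rightarrow> (nat \<Rightarrow> 'k::comm_ring_1) set \<Rightarrow> bool" where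
  "proj_closed n Y \<longleftrightarrow> (\<exists>S. S \<subseteq> polyring {0..n} \<and> (\<forall>g\<in>S. homogeneous g) \<and>
      Y = {v\<in>cone_points n. \<forall>g\<in>S. mpoly_eval g v = 0})"

text \<open>The (saturated, homogeneous) ideal of Y in k[x_0..x_n].\<close>
definition van_ideal :: "nat \<Rightarrow> (nat \<Rightarrow> 'k::comm_ring_1) set \<Rightarrow> 'k mpoly set" where
  "van_ideal n Y = {f\<in>polyring {0..n}. \<forall>v\<in>Y. mpoly_eval f v = 0}"

definition monomial_order :: "nat \<Rightarrow> (mono \<Rightarrow> mono \<Rightarrow> bool) \<Rightarrow> bool" where
  "monomial_order n ord \<longleftrightarrow>
    (let M = {a::mono. Poly_Mapping.keys a \<subseteq> {0..n}} in
      (\<forall>a\<in>M. ord a a) \<and>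
      (\<forall>a\<in>M. \<forall>b\<in>M. ord a b \<and> ord b a \<longrightarrow> a = b) \<and>
      (\<forall>a\<in>M. \<forall>b\<in>M. \<forall>c\<in>M. ord a b \<and> ord b c \<longrightarrow> ord a c) \<and>
      (\<forall>a\<in>M. \<forall>b\<in>M. ord a b \<or> ord b a) \<and>
      (\<forall>a\<in>M. ord 0 a) \<and>
      (\<forall>a\<in>M. \<forall>b\<in>M. \<forall>c\<in>M. ord a b \<longrightarrow> ord (a + c) (b + c)))"

definition lead_mono :: "(mono \<Rightarrow> mono \<Rightarrow> bool) \<Rightarrow> ('k::zero) mpoly \<Rightarrow> mono" where
  "lead_mono ord f = (THE a. a \<in> Poly_Mapping.keys f \<and> (\<forall>b\<in>Poly_Mapping.keys f. ord b a))"

definition gen_ideal :: "('k::comm_ring_1) mpoly set \<Rightarrow> 'k mpoly set \<Rightarrow> 'k mpoly set" where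
  "gen_ideal R G = {f. \<exists>G' c. finite G' \<and> G' \<subseteq> G \<and> (\<forall>g\<in>G'. c g \<in> R) \<and>
                          f = (\<Sum>g\<in>G'. c g * g)}"

definition init_ideal :: "(mono \<Rightarrow> mono \<Rightarrow> bool) \<Rightarrow> ('k::comm_ring_1) mpoly set \<Rightarrow> 'k mpoly set \<Rightarrow> 'k mpoly set" where
  "init_ideal ord R I = gen_ideal R {Poly_Mapping.single (lead_mono ord f) 1 | f. f \<in> I \<and> f \<noteq> 0}"

definition std_monos :: "(mono \<Rightarrow> mono \<Rightarrow> bool) \<Rightarrow> nat set \<Rightarrow> ('k::comm_ring_1) mpoly set \<Rightarrow> nat \<Rightarrow> mono set" where
  "std_monos ord V I m = {a. Poly_Mapping.keys a \<subseteq> V \<and> mdeg a = m \<and>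
      (Poly_Mapping.single a (1::'k)) \<notin> init_ideal ord (polyring V) (I \<inter> polyring V)}"

end

theory Submission
  imports Defs
begin

text \<open>The point p of Y \<inter> Z is the coordinate point of x_l, and as Y and Z are cones over an
  infinite field, they contain the whole x_l-axis. Hence no polynomial vanishing on Y or on Z
  has a nonzero coefficient at a pure power of x_l. Consequently an f \<in> I_Y involving only
  x_l, ..., x_n has a variable x_j with j > l in each of its monomials, so it vanishes on Z too;
  symmetrically for Z. A standard monomial of I_X cannot involve both some x_i with i < l and
  some x_j with j > l, because x_i x_j \<in> I_X; so it lives in one of the two subrings, where
  the preceding remark identifies its obstructions with those of I_Y resp. I_Z. Conversely,
  dropping from f \<in> I_Y all monomials outside k[x_l, ..., x_n] keeps f in I_Y and keeps its
  leading monomial whenever the latter divides a monomial of that subring. Finally x_l^m is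
  standard on both sides, as no leading monomial is a pure power of x_l.\<close>

lemma keys_plus_mono: "Poly_Mapping.keys (a + b :: mono) = Poly_Mapping.keys a \<union> Poly_Mapping.keys b"
  by (auto simp: in_keys_iff lookup_add)

lemma keys_subset_singleton_iff:
  "Poly_Mapping.keys (a::mono) \<subseteq> {l} \<longleftrightarrow> a = Poly_Mapping.single l (Poly_Mapping.lookup a l)"
proof
  assume "Poly_Mapping.keys a \<subseteq> {l}"
  then show "a = Poly_Mapping.single l (Poly_Mapping.lookup a l)"
    by (intro poly_mapping_eqI) (auto simp: lookup_single in_keys_iff when_def)
next
  assume "a = Poly_Mapping.single l (Poly_Mapping.lookup a l)"
  then show "Poly_Mapping.keys a \<subseteq> {l}"
    by (metis empty_subsetI insert_subsetI keys_single order.refl)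
qed

lemma mdeg_single [simp]: "mdeg (Poly_Mapping.single l d) = d"
  by (simp add: mdeg_def)

lemma monomial_eval_eq_0:
  assumes "i \<in> Poly_Mapping.keys a" "v i = 0"
  shows "(\<Prod>i\<in>Poly_Mapping.keys a. v i ^ Poly_Mapping.lookup a i) = (0::'k::comm_semiring_1)"
  using assms by (intro prod_zero) (auto simp: in_keys_iff power_0_left intro!: bexI[of _ i])

lemma mpoly_eval_single:
  "mpoly_eval (Poly_Mapping.single b c) v = c * (\<Prod>i\<in>Poly_Mapping.keys b. v i ^ Poly_Mapping.lookup b i)"
  by (simp add: mpoly_eval_def)

lemma single_mem_van_ideal:
  assumes "Poly_Mapping.keys b \<subseteq> {0..n}" "i \<in> Poly_Mapping.keys b" "\<forall>v\<in>W. v i = 0"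
  shows "Poly_Mapping.single b c \<in> van_ideal n W"
  using assms unfolding van_ideal_def polyring_def
  by (auto simp: mpoly_eval_single monomial_eval_eq_0)

lemma polyring_mono: "V \<subseteq> V' \<Longrightarrow> polyring V \<subseteq> polyring V'"
  unfolding polyring_def by auto

subsection \<open>Restriction to a subset of the variables\<close>

definition mpoly_restrict :: "nat set \<Rightarrow> ('k::zero) mpoly \<Rightarrow> 'k mpoly" where
  "mpoly_restrict V f =
     Abs_poly_mapping (\<lambda>a. if Poly_Mapping.keys a \<subseteq> V then Poly_Mapping.lookup f a else 0)"

lemma lookup_mpoly_restrict:
  "Poly_Mapping.lookup (mpoly_restrict V f) a =
     (if Poly_Mapping.keys a \<subseteq> V then Poly_Mapping.lookup f a else 0)"
proof -
  have "finite {a. (if Poly_Mapping.keys a \<subseteq> V then Poly_Mapping.lookup f a else 0) \<noteq> 0}"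
    by (rule finite_subset[of _ "Poly_Mapping.keys f"]) (auto simp: in_keys_iff)
  then show ?thesis
    unfolding mpoly_restrict_def by simp
qed

lemma keys_mpoly_restrict:
  "Poly_Mapping.keys (mpoly_restrict V f) = {a \<in> Poly_Mapping.keys f. Poly_Mapping.keys a \<subseteq> V}"
proof (rule set_eqI)
  fix a
  show "a \<in> Poly_Mapping.keys (mpoly_restrict V f) \<longleftrightarrow>
      a \<in> {a \<in> Poly_Mapping.keys f. Poly_Mapping.keys a \<subseteq> V}"
    unfolding in_keys_iff[of a] mem_Collect_eq lookup_mpoly_restrict by simp
qed

lemma mpoly_restrict_mem_polyring: "mpoly_restrict V f \<in> polyring V"
  by (auto simp: polyring_def keys_mpoly_restrict)

lemma mpoly_eval_mpoly_restrict:
  assumes "f \<in> polyring U" "\<forall>i\<in>U - V. v i = 0"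
  shows "mpoly_eval (mpoly_restrict V f) v = mpoly_eval (f::'k::comm_ring_1 mpoly) v"
  unfolding mpoly_eval_def
proof (rule sum.mono_neutral_cong_left)
  show "\<forall>a\<in>Poly_Mapping.keys f - Poly_Mapping.keys (mpoly_restrict V f).
      Poly_Mapping.lookup f a * (\<Prod>i\<in>Poly_Mapping.keys a. v i ^ Poly_Mapping.lookup a i) = 0"
  proof
    fix a assume "a \<in> Poly_Mapping.keys f - Poly_Mapping.keys (mpoly_restrict V f)"
    then obtain i where "i \<in> Poly_Mapping.keys a" "i \<in> U - V"
      using assms(1) by (auto simp: keys_mpoly_restrict polyring_def)
    then show "Poly_Mapping.lookup f a * (\<Prod>i\<in>Poly_Mapping.keys a. v i ^ Poly_Mapping.lookup a i) = 0"
      using assms(2) by (simp add: monomial_eval_eq_0)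
  qed
qed (auto simp: keys_mpoly_restrict lookup_mpoly_restrict)

lemma mpoly_restrict_singleton_eq_0:
  assumes "\<forall>d. Poly_Mapping.lookup f (Poly_Mapping.single l d) = 0"
  shows "mpoly_restrict {l} f = 0"
  by (rule poly_mapping_eqI) (metis assms keys_subset_singleton_iff lookup_mpoly_restrict lookup_zero)

subsection \<open>Polynomials vanishing on a cone through a coordinate point\<close>

lemma mpoly_eval_homogeneous:
  assumes "\<forall>a\<in>Poly_Mapping.keys g. mdeg a = d"
  shows "mpoly_eval (g::'k::comm_ring_1 mpoly) (\<lambda>i. t * w i) = t ^ d * mpoly_eval g w"
  unfolding mpoly_eval_def sum_distrib_left
proof (rule sum.cong[OF refl])
  fix a assume a: "a \<in> Poly_Mapping.keys g"
  have "(\<Prod>i\<in>Poly_Mapping.keys a. (t * w i) ^ Poly_Mapping.lookup a i)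
      = t ^ d * (\<Prod>i\<in>Poly_Mapping.keys a. w i ^ Poly_Mapping.lookup a i)"
    using assms a by (simp add: power_mult_distrib prod.distrib power_sum[symmetric] mdeg_def)
  then show "Poly_Mapping.lookup g a * (\<Prod>i\<in>Poly_Mapping.keys a. (t * w i) ^ Poly_Mapping.lookup a i) =
      t ^ d * (Poly_Mapping.lookup g a * (\<Prod>i\<in>Poly_Mapping.keys a. w i ^ Poly_Mapping.lookup a i))"
    by (simp add: ac_simps)
qed

lemma proj_closed_subset_cone_points: "proj_closed n W \<Longrightarrow> W \<subseteq> cone_points n"
  unfolding proj_closed_def by auto

lemma proj_closed_scale:
  assumes "proj_closed n W" "v \<in> W" "(t::'k::field) \<noteq> 0"
  shows "(\<lambda>i. t * v i) \<in> W"
proof -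
  obtain S where S: "\<forall>g\<in>S. homogeneous g" "W = {v\<in>cone_points n. \<forall>g\<in>S. mpoly_eval g v = 0}"
    using assms(1) unfolding proj_closed_def by blast
  have "mpoly_eval g (\<lambda>i. t * v i) = 0" if "g \<in> S" for g
  proof -
    obtain d where "\<forall>a\<in>Poly_Mapping.keys g. mdeg a = d"
      using S(1) \<open>g \<in> S\<close> unfolding homogeneous_def by blast
    then have "mpoly_eval g (\<lambda>i. t * v i) = t ^ d * mpoly_eval g v"
      by (rule mpoly_eval_homogeneous)
    then show ?thesis
      using assms(2) S(2) \<open>g \<in> S\<close> by simp
  qed
  moreover have "(\<lambda>i. t * v i) \<in> cone_points n"
    using assms(2,3) S(2) unfolding cone_points_def by auto
  ultimately show ?thesis
    using S(2) by simp
qed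

definition axis_poly :: "nat \<Rightarrow> ('k::comm_ring_1) mpoly \<Rightarrow> 'k poly" where
  "axis_poly l f = (\<Sum>d \<in> Poly_Mapping.single l -` Poly_Mapping.keys f.
     monom (Poly_Mapping.lookup f (Poly_Mapping.single l d)) d)"

lemma finite_axis_exponents: "finite (Poly_Mapping.single l -` Poly_Mapping.keys f)"
  by (rule finite_vimageI) simp_all

lemma coeff_axis_poly: "coeff (axis_poly l f) d = Poly_Mapping.lookup f (Poly_Mapping.single l d)"
  by (simp add: axis_poly_def coeff_sum coeff_monom sum.delta finite_axis_exponents in_keys_iff)

lemma poly_axis_poly:
  assumes "\<forall>i. i \<noteq> l \<longrightarrow> v i = 0"
  shows "poly (axis_poly l f) (v l) = mpoly_eval f v"
proof -
  let ?D = "Poly_Mapping.single l -` Poly_Mapping.keys f"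
  have keys_restrict: "Poly_Mapping.keys (mpoly_restrict {l} f) = Poly_Mapping.single l ` ?D"
    by (auto simp: keys_mpoly_restrict keys_subset_singleton_iff)
  have "mpoly_eval f v = mpoly_eval (mpoly_restrict {l} f) v"
    using assms by (intro mpoly_eval_mpoly_restrict[symmetric, of _ UNIV]) (auto simp: polyring_def)
  also have "\<dots> = (\<Sum>d\<in>?D. Poly_Mapping.lookup f (Poly_Mapping.single l d) * v l ^ d)"
    unfolding mpoly_eval_def keys_restrict
    by (rule sum.reindex_cong[where l = "Poly_Mapping.single l"])
      (auto simp: lookup_mpoly_restrict inj_on_subset[OF inj_single])
  also have "\<dots> = poly (axis_poly l f) (v l)"
    by (simp add: axis_poly_def poly_sum poly_monom)
  finally show ?thesis ..
qed

lemma van_ideal_axis_coeff_eq_0: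
  fixes W :: "(nat \<Rightarrow> 'k::field) set"
  assumes "infinite (UNIV :: 'k set)" "proj_closed n W"
    and "p \<in> W" "\<forall>i. i \<noteq> l \<longrightarrow> p i = 0" and "f \<in> van_ideal n W"
  shows "Poly_Mapping.lookup f (Poly_Mapping.single l d) = 0"
proof -
  have "p l \<noteq> 0"
    using assms(2-4) proj_closed_subset_cone_points unfolding cone_points_def by fastforce
  have root: "poly (axis_poly l f) x = 0" if "x \<noteq> 0" for x
  proof -
    define q where "q = (\<lambda>i. x / p l * p i)"
    have "q \<in> W"
      unfolding q_def by (rule proj_closed_scale[OF assms(2,3)]) (use \<open>p l \<noteq> 0\<close> that in simp)
    moreover have "q l = x" "\<forall>i. i \<noteq> l \<longrightarrow> q i = 0"
      using \<open>p l \<noteq> 0\<close> assms(4) by (simp_all add: q_def)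
    ultimately show ?thesis
      using assms(5) poly_axis_poly[of l q f] unfolding van_ideal_def by auto
  qed
  have "axis_poly l f = 0"
  proof (rule ccontr)
    assume "axis_poly l f \<noteq> 0"
    then have "finite {x. poly (axis_poly l f) x = 0}"
      by (rule poly_roots_finite)
    moreover have "UNIV - {0} \<subseteq> {x. poly (axis_poly l f) x = 0}"
      using root by blast
    ultimately show False
      using assms(1) by (meson finite_Diff2 finite.emptyI finite_insert finite_subset)
  qed
  then show ?thesis
    by (metis coeff_0 coeff_axis_poly)
qed

subsection \<open>Leading monomials and standard monomials\<close>

lemma monomial_order_refl:
  "monomial_order n ord \<Longrightarrow> Poly_Mapping.keys a \<subseteq> {0..n} \<Longrightarrow> ord a a"
  unfolding monomial_order_def Let_def by blast

lemma monomial_order_antisym: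
  "monomial_order n ord \<Longrightarrow> Poly_Mapping.keys a \<subseteq> {0..n} \<Longrightarrow> Poly_Mapping.keys b \<subseteq> {0..n} \<Longrightarrow>
    ord a b \<Longrightarrow> ord b a \<Longrightarrow> a = b"
  unfolding monomial_order_def Let_def by blast

lemma monomial_order_trans:
  "monomial_order n ord \<Longrightarrow> Poly_Mapping.keys a \<subseteq> {0..n} \<Longrightarrow> Poly_Mapping.keys b \<subseteq> {0..n} \<Longrightarrow>
    Poly_Mapping.keys c \<subseteq> {0..n} \<Longrightarrow> ord a b \<Longrightarrow> ord b c \<Longrightarrow> ord a c"
  unfolding monomial_order_def Let_def by blast

lemma monomial_order_total:
  "monomial_order n ord \<Longrightarrow> Poly_Mapping.keys a \<subseteq> {0..n} \<Longrightarrow> Poly_Mapping.keys b \<subseteq> {0..n} \<Longrightarrow>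
    ord a b \<or> ord b a"
  unfolding monomial_order_def Let_def by blast

lemma monomial_order_has_greatest:
  assumes "monomial_order n ord" "finite S" "S \<noteq> {}" "\<forall>a\<in>S. Poly_Mapping.keys a \<subseteq> {0..n}"
  shows "\<exists>a\<in>S. \<forall>b\<in>S. ord b a"
  using assms(2-4)
proof (induction S rule: finite_ne_induct)
  case (singleton x)
  then show ?case
    using monomial_order_refl[OF assms(1)] by simp
next
  case (insert x F)
  then obtain a where a: "a \<in> F" "\<forall>b\<in>F. ord b a"
    by auto
  show ?case
  proof (cases "ord x a")
    case True
    then show ?thesis
      using a insert.prems by auto
  next
    case False
    then have "ord a x"
      using monomial_order_total[OF assms(1)] insert.prems a(1) by blast
    then have "\<forall>b\<in>F. ord b x"
      using monomial_order_trans[OF assms(1)] a insert.prems by (metis insert_iff)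
    then show ?thesis
      using insert.prems monomial_order_refl[OF assms(1)] by auto
  qed
qed

lemma lead_mono_eqI:
  assumes "monomial_order n ord" "f \<in> polyring {0..n}"
    and "a \<in> Poly_Mapping.keys f" "\<forall>b\<in>Poly_Mapping.keys f. ord b a"
  shows "lead_mono ord f = a"
  unfolding lead_mono_def
proof (rule the_equality)
  fix b assume "b \<in> Poly_Mapping.keys f \<and> (\<forall>c\<in>Poly_Mapping.keys f. ord c b)"
  then show "b = a"
    using monomial_order_antisym[OF assms(1)] assms(2-4) unfolding polyring_def by blast
qed (use assms(3,4) in blast)

lemma lead_mono_greatest:
  assumes "monomial_order n ord" "f \<in> polyring {0..n}" "f \<noteq> 0"
  shows "lead_mono ord f \<in> Poly_Mapping.keys f" "\<forall>b\<in>Poly_Mapping.keys f. ord b (lead_mono ord f)"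
proof -
  obtain a where "a \<in> Poly_Mapping.keys f" "\<forall>b\<in>Poly_Mapping.keys f. ord b a"
    using monomial_order_has_greatest[OF assms(1), of "Poly_Mapping.keys f"] assms(2,3)
    unfolding polyring_def by auto
  with lead_mono_eqI[OF assms(1,2)] show "lead_mono ord f \<in> Poly_Mapping.keys f"
    "\<forall>b\<in>Poly_Mapping.keys f. ord b (lead_mono ord f)"
    by simp_all
qed

lemma lead_mono_single:
  assumes "monomial_order n ord" "Poly_Mapping.keys b \<subseteq> {0..n}" "c \<noteq> 0"
  shows "lead_mono ord (Poly_Mapping.single b c) = b"
  using assms by (intro lead_mono_eqI[OF assms(1)]) (auto simp: polyring_def monomial_order_refl)

lemma single_mem_monomial_ideal_iff:
  assumes "Poly_Mapping.keys a \<subseteq> V"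
  shows "Poly_Mapping.single a (1::'k::comm_ring_1)
           \<in> gen_ideal (polyring V) ((\<lambda>b. Poly_Mapping.single b 1) ` B)
     \<longleftrightarrow> (\<exists>b\<in>B. \<exists>c. a = b + c)"
proof
  assume "Poly_Mapping.single a (1::'k) \<in> gen_ideal (polyring V) ((\<lambda>b. Poly_Mapping.single b 1) ` B)"
  then obtain G c where G: "G \<subseteq> (\<lambda>b. Poly_Mapping.single b 1) ` B"
    and sum: "Poly_Mapping.single a (1::'k) = (\<Sum>g\<in>G. c g * g)"
    unfolding gen_ideal_def by blast
  have "(\<Sum>g\<in>G. Poly_Mapping.lookup (c g * g) a) \<noteq> 0"
    using arg_cong[OF sum, of "\<lambda>p. Poly_Mapping.lookup p a"] by (simp add: lookup_sum)
  then obtain g where "g \<in> G" "a \<in> Poly_Mapping.keys (c g * g)"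
    by (meson in_keys_iff sum.not_neutral_contains_not_neutral)
  moreover obtain b where "b \<in> B" "g = Poly_Mapping.single b 1"
    using G \<open>g \<in> G\<close> by blast
  ultimately obtain x where "a = x + b"
    using keys_mult[of "c g" g] by auto
  with \<open>b \<in> B\<close> show "\<exists>b\<in>B. \<exists>c. a = b + c"
    by (metis add.commute)
next
  assume "\<exists>b\<in>B. \<exists>c. a = b + c"
  then obtain b c where "b \<in> B" and a: "a = b + c"
    by blast
  then have "Poly_Mapping.single c (1::'k) \<in> polyring V"
    using assms by (auto simp: polyring_def keys_plus_mono)
  moreover have "Poly_Mapping.single a (1::'k) = Poly_Mapping.single c 1 * Poly_Mapping.single b 1"
    by (simp add: a mult_single add.commute)
  ultimately show "Poly_Mapping.single a (1::'k) \<in> gen_ideal (polyring V) ((\<lambda>b. Poly_Mapping.single b 1) ` B)"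
    unfolding gen_ideal_def using \<open>b \<in> B\<close>
    by (intro CollectI exI[of _ "{Poly_Mapping.single b 1}"]
        exI[of _ "\<lambda>_. Poly_Mapping.single c 1"]) auto
qed

lemma std_monos_iff:
  "a \<in> std_monos ord V (I::'k::comm_ring_1 mpoly set) m \<longleftrightarrow>
     Poly_Mapping.keys a \<subseteq> V \<and> mdeg a = m \<and>
     (\<forall>f\<in>I \<inter> polyring V. \<forall>c. f \<noteq> 0 \<longrightarrow> a \<noteq> lead_mono ord f + c)"
proof -
  let ?L = "{lead_mono ord f | f. f \<in> I \<inter> polyring V \<and> f \<noteq> 0}"
  have init: "init_ideal ord (polyring V) (I \<inter> polyring V) =
      gen_ideal (polyring V) ((\<lambda>b. Poly_Mapping.single b 1) ` ?L)"
    unfolding init_ideal_def by (rule arg_cong[where f = "gen_ideal _"]) auto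
  have "Poly_Mapping.single a (1::'k) \<in> init_ideal ord (polyring V) (I \<inter> polyring V) \<longleftrightarrow>
      (\<exists>f\<in>I \<inter> polyring V. \<exists>c. f \<noteq> 0 \<and> a = lead_mono ord f + c)"
    if "Poly_Mapping.keys a \<subseteq> V"
  proof -
    have "Poly_Mapping.single a (1::'k) \<in> init_ideal ord (polyring V) (I \<inter> polyring V) \<longleftrightarrow>
        (\<exists>b\<in>?L. \<exists>c. a = b + c)"
      unfolding init by (rule single_mem_monomial_ideal_iff[OF that])
    also have "\<dots> \<longleftrightarrow> (\<exists>f\<in>I \<inter> polyring V. \<exists>c. f \<noteq> 0 \<and> a = lead_mono ord f + c)"
      by blast
    finally show ?thesis .
  qed
  then show ?thesis
    unfolding std_monos_def by auto
qed

subsection \<open>Standard monomials of the union of two cones\<close>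

lemma mono_eq_pair_plus:
  assumes "i \<in> Poly_Mapping.keys (a::mono)" "j \<in> Poly_Mapping.keys a" "i \<noteq> j"
  shows "a = (Poly_Mapping.single i 1 + Poly_Mapping.single j 1) +
             (a - (Poly_Mapping.single i 1 + Poly_Mapping.single j 1))"
proof (rule poly_mapping_eqI)
  fix k
  have "Poly_Mapping.lookup (Poly_Mapping.single i 1 + Poly_Mapping.single j 1) k \<le> Poly_Mapping.lookup a k"
    using assms by (auto simp: lookup_add lookup_single in_keys_iff when_def)
  then show "Poly_Mapping.lookup a k = Poly_Mapping.lookup ((Poly_Mapping.single i 1 + Poly_Mapping.single j 1) +
             (a - (Poly_Mapping.single i 1 + Poly_Mapping.single j 1))) k"
    by (simp only: lookup_add lookup_minus)
qed

lemma std_monos_antimono: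
  assumes "V \<subseteq> V'" "I' \<inter> polyring V \<subseteq> I"
    and "a \<in> std_monos ord V' I m" "Poly_Mapping.keys a \<subseteq> V"
  shows "a \<in> std_monos ord V I' m"
  using assms polyring_mono[OF assms(1)] by (auto simp: std_monos_iff)

lemma std_monos_Int_subset_single:
  assumes "V \<inter> V' = {l}"
  shows "std_monos ord V I m \<inter> std_monos ord V' I' m \<subseteq> {Poly_Mapping.single l m}"
proof
  fix a assume "a \<in> std_monos ord V I m \<inter> std_monos ord V' I' m"
  then have "Poly_Mapping.keys a \<subseteq> {l}" "mdeg a = m"
    using assms by (auto simp: std_monos_iff)
  then show "a \<in> {Poly_Mapping.single l m}"
    by (metis keys_subset_singleton_iff mdeg_single singletonI)
qed

lemma std_monos_not_multiple_of_pair: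
  assumes "monomial_order n ord" "V \<subseteq> {0..n}" "a \<in> std_monos ord V I m"
    and "i \<in> Poly_Mapping.keys a" "j \<in> Poly_Mapping.keys a" "i \<noteq> j"
  shows "Poly_Mapping.single (Poly_Mapping.single i 1 + Poly_Mapping.single j 1) (1::'k::comm_ring_1) \<notin> I"
proof
  let ?b = "Poly_Mapping.single i 1 + Poly_Mapping.single j (1::nat)"
  assume b: "Poly_Mapping.single ?b (1::'k) \<in> I"
  have "Poly_Mapping.keys a \<subseteq> V"
    using assms(3) by (simp add: std_monos_iff)
  then have "Poly_Mapping.keys ?b \<subseteq> V"
    using assms(4,5) by (auto simp: keys_plus_mono)
  then have "Poly_Mapping.single ?b (1::'k) \<in> polyring V"
    and "lead_mono ord (Poly_Mapping.single ?b (1::'k)) = ?b"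
    using assms(2) by (auto simp: polyring_def intro!: lead_mono_single[OF assms(1)])
  moreover have "Poly_Mapping.single ?b (1::'k) \<noteq> 0"
    by (metis lookup_single_eq lookup_zero zero_neq_one)
  ultimately have "a \<noteq> ?b + (a - ?b)"
    using assms(3) b unfolding std_monos_iff by (metis IntI)
  then show False
    using mono_eq_pair_plus[OF assms(4-6)] by blast
qed

lemma single_axis_mem_std_monos:
  assumes "monomial_order n ord" "l \<in> V" "V \<subseteq> {0..n}"
    and "\<forall>f\<in>I. \<forall>d. Poly_Mapping.lookup f (Poly_Mapping.single l d) = (0::'k::comm_ring_1)"
  shows "Poly_Mapping.single l m \<in> std_monos ord V I m"
  unfolding std_monos_iff
proof (intro conjI ballI allI impI notI)
  show "Poly_Mapping.keys (Poly_Mapping.single l m) \<subseteq> V"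
    using assms(2) by simp
  fix f c assume f: "f \<in> I \<inter> polyring V" "f \<noteq> 0"
    and eq: "Poly_Mapping.single l m = lead_mono ord f + c"
  have "f \<in> polyring {0..n}"
    using f(1) polyring_mono[OF assms(3)] by blast
  then have lead: "lead_mono ord f \<in> Poly_Mapping.keys f"
    using lead_mono_greatest(1)[OF assms(1)] f(2) by blast
  have "Poly_Mapping.keys (lead_mono ord f) \<subseteq> {l}"
    using arg_cong[OF eq, of Poly_Mapping.keys] by (auto simp: keys_plus_mono split: if_splits)
  then show False
    using lead assms(4) f(1) by (metis IntD1 in_keys_iff keys_subset_singleton_iff)
qed simp

lemma std_monos_van_ideal_subset:
  assumes "monomial_order n ord" "U \<subseteq> {0..n}"
    and "\<forall>v\<in>W. \<forall>i\<in>{0..n} - U. v i = 0" "I \<subseteq> van_ideal n W"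
  shows "std_monos ord U (van_ideal n W) m \<subseteq> std_monos ord {0..n} (I::'k::comm_ring_1 mpoly set) m"
proof
  fix a assume a: "a \<in> std_monos ord U (van_ideal n W) m"
  have "a \<noteq> lead_mono ord f + c" if f: "f \<in> I \<inter> polyring {0..n}" "f \<noteq> 0" for f c
  proof
    assume a_eq: "a = lead_mono ord f + c"
    define g where "g = mpoly_restrict U f"
    have g_keys: "Poly_Mapping.keys g \<subseteq> Poly_Mapping.keys f" "g \<in> polyring {0..n}"
      using polyring_mono[OF assms(2)] mpoly_restrict_mem_polyring
      by (auto simp: g_def keys_mpoly_restrict)
    have "Poly_Mapping.keys (lead_mono ord f) \<subseteq> U"
      using a a_eq by (auto simp: std_monos_iff keys_plus_mono)
    then have lead_g: "lead_mono ord f \<in> Poly_Mapping.keys g"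
      using lead_mono_greatest(1)[OF assms(1)] f by (auto simp: g_def keys_mpoly_restrict)
    have "lead_mono ord g = lead_mono ord f"
      using lead_mono_greatest(2)[OF assms(1)] f g_keys lead_g by (intro lead_mono_eqI[OF assms(1)]) auto
    moreover have "g \<in> van_ideal n W"
      using assms(3,4) f g_keys(2) mpoly_eval_mpoly_restrict[of f "{0..n}" U]
      unfolding van_ideal_def g_def by auto
    moreover have "g \<noteq> 0"
      using lead_g by auto
    ultimately show False
      using a a_eq mpoly_restrict_mem_polyring[of U f] unfolding std_monos_iff g_def by auto
  qed
  then show "a \<in> std_monos ord {0..n} I m"
    using a assms(2) by (auto simp: std_monos_iff)
qed

lemma van_ideal_Int_polyring_subset:
  assumes "\<forall>f\<in>van_ideal n Y. \<forall>d. Poly_Mapping.lookup f (Poly_Mapping.single l d) = 0"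
    and "\<forall>v\<in>Z. \<forall>i\<in>U - {l}. v i = 0" "U \<subseteq> {0..n}"
  shows "van_ideal n Y \<inter> polyring U \<subseteq> van_ideal n (Z :: (nat \<Rightarrow> 'k::comm_ring_1) set)"
proof
  fix f assume f: "f \<in> van_ideal n Y \<inter> polyring U"
  have "mpoly_eval f v = 0" if "v \<in> Z" for v
  proof -
    have "mpoly_eval f v = mpoly_eval (mpoly_restrict {l} f) v"
      using f assms(2) that by (intro mpoly_eval_mpoly_restrict[symmetric]) auto
    also have "\<dots> = 0"
      using f assms(1) by (simp add: mpoly_restrict_singleton_eq_0 mpoly_eval_def)
    finally show ?thesis .
  qed
  then show "f \<in> van_ideal n Z"
    using f polyring_mono[OF assms(3)] unfolding van_ideal_def by auto
qed

lemma std_monos_van_ideal_Int_subset_Un: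
  fixes Y Z :: "(nat \<Rightarrow> 'k::comm_ring_1) set"
  assumes "monomial_order n ord" "U \<union> V = {0..n}" "U \<inter> V = {l}"
    and "\<forall>v\<in>Y. \<forall>i\<in>{0..n} - U. v i = 0" "\<forall>v\<in>Z. \<forall>i\<in>{0..n} - V. v i = 0"
    and "\<forall>f\<in>van_ideal n Y. \<forall>d. Poly_Mapping.lookup f (Poly_Mapping.single l d) = 0"
    and "\<forall>f\<in>van_ideal n Z. \<forall>d. Poly_Mapping.lookup f (Poly_Mapping.single l d) = 0"
  shows "std_monos ord {0..n} (van_ideal n Y \<inter> van_ideal n Z) m
           \<subseteq> std_monos ord U (van_ideal n Y) m \<union> std_monos ord V (van_ideal n Z) m"
proof
  fix a assume a: "a \<in> std_monos ord {0..n} (van_ideal n Y \<inter> van_ideal n Z) m"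
  have "Poly_Mapping.keys a \<subseteq> U \<or> Poly_Mapping.keys a \<subseteq> V"
  proof (rule ccontr)
    assume "\<not> ?thesis"
    then obtain i j where i: "i \<in> Poly_Mapping.keys a" "i \<notin> U"
      and j: "j \<in> Poly_Mapping.keys a" "j \<notin> V"
      by blast
    let ?b = "Poly_Mapping.single i 1 + Poly_Mapping.single j (1::nat)"
    have "Poly_Mapping.keys a \<subseteq> {0..n}"
      using a by (simp add: std_monos_iff)
    then have ij: "i \<in> {0..n} - U" "j \<in> {0..n} - V" "i \<noteq> j" "Poly_Mapping.keys ?b \<subseteq> {0..n}"
      using i j assms(2) by (auto simp: keys_plus_mono)
    have "Poly_Mapping.single ?b (1::'k) \<in> van_ideal n Y"
      and "Poly_Mapping.single ?b (1::'k) \<in> van_ideal n Z"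
      using ij assms(4,5)
      by (auto simp: keys_plus_mono intro: single_mem_van_ideal[of _ _ i] single_mem_van_ideal[of _ _ j])
    then show False
      using std_monos_not_multiple_of_pair[OF assms(1) _ a i(1) j(1) ij(3)] by simp
  qed
  moreover have "van_ideal n Y \<inter> polyring U \<subseteq> van_ideal n Y \<inter> van_ideal n Z"
    using van_ideal_Int_polyring_subset[OF assms(6), of Z U] assms(2,3,5) by blast
  moreover have "van_ideal n Z \<inter> polyring V \<subseteq> van_ideal n Y \<inter> van_ideal n Z"
    using van_ideal_Int_polyring_subset[OF assms(7), of Y V] assms(2,3,4) by blast
  ultimately show "a \<in> std_monos ord U (van_ideal n Y) m \<union> std_monos ord V (van_ideal n Z) m"
    using std_monos_antimono[OF _ _ a] assms(2) by blast
qed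

lemma std_monos_van_ideal_Int:
  fixes Y Z :: "(nat \<Rightarrow> 'k::comm_ring_1) set"
  assumes "monomial_order n ord" "U \<union> V = {0..n}" "U \<inter> V = {l}"
    and "\<forall>v\<in>Y. \<forall>i\<in>{0..n} - U. v i = 0" "\<forall>v\<in>Z. \<forall>i\<in>{0..n} - V. v i = 0"
    and "\<forall>f\<in>van_ideal n Y. \<forall>d. Poly_Mapping.lookup f (Poly_Mapping.single l d) = 0"
    and "\<forall>f\<in>van_ideal n Z. \<forall>d. Poly_Mapping.lookup f (Poly_Mapping.single l d) = 0"
  shows "std_monos ord {0..n} (van_ideal n Y \<inter> van_ideal n Z) m
           = std_monos ord U (van_ideal n Y) m \<union> std_monos ord V (van_ideal n Z) m
         \<and> std_monos ord U (van_ideal n Y) m \<inter> std_monos ord V (van_ideal n Z) m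
           = {Poly_Mapping.single l m}"
proof -
  let ?I = "van_ideal n Y \<inter> van_ideal n Z"
  have UV: "U \<subseteq> {0..n}" "V \<subseteq> {0..n}" "l \<in> U" "l \<in> V"
    using assms(2,3) by auto
  have "std_monos ord {0..n} ?I m \<subseteq> std_monos ord U (van_ideal n Y) m \<union> std_monos ord V (van_ideal n Z) m"
    by (rule std_monos_van_ideal_Int_subset_Un[OF assms])
  moreover have "std_monos ord U (van_ideal n Y) m \<subseteq> std_monos ord {0..n} ?I m"
    by (rule std_monos_van_ideal_subset[OF assms(1) UV(1) assms(4)]) blast
  moreover have "std_monos ord V (van_ideal n Z) m \<subseteq> std_monos ord {0..n} ?I m"
    by (rule std_monos_van_ideal_subset[OF assms(1) UV(2) assms(5)]) blast
  moreover have "std_monos ord U (van_ideal n Y) m \<inter> std_monos ord V (van_ideal n Z) m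
      \<subseteq> {Poly_Mapping.single l m}"
    by (rule std_monos_Int_subset_single[OF assms(3)])
  moreover have "Poly_Mapping.single l m \<in> std_monos ord U (van_ideal n Y) m"
    by (rule single_axis_mem_std_monos[OF assms(1) UV(3,1) assms(6)])
  moreover have "Poly_Mapping.single l m \<in> std_monos ord V (van_ideal n Z) m"
    by (rule single_axis_mem_std_monos[OF assms(1) UV(4,2) assms(7)])
  ultimately show ?thesis
    by blast
qed

theorem lemma3p3:
  fixes Y Z :: "(nat \<Rightarrow> 'k::{alg_closed_field, field_char_0}) set"
    and n l m :: nat and ord :: "mono \<Rightarrow> mono \<Rightarrow> bool"
  assumes "0 < l" and "l < n"
    and "proj_closed n Y" and "proj_closed n Z"
    and "\<forall>v\<in>Y. \<forall>i<l. v i = 0"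
    and "\<forall>v\<in>Z. \<forall>i\<in>{l+1..n}. v i = 0"
    and "Y \<inter> Z \<noteq> {}"
    and "monomial_order n ord"
    and "0 < m"
  shows "std_monos ord {0..n} (van_ideal n Y \<inter> van_ideal n Z) m
           = std_monos ord {l..n} (van_ideal n Y) m \<union> std_monos ord {0..l} (van_ideal n Z) m
         \<and> std_monos ord {l..n} (van_ideal n Y) m \<inter> std_monos ord {0..l} (van_ideal n Z) m
           = {Poly_Mapping.single l m}"
proof -
  obtain p where p: "p \<in> Y" "p \<in> Z"
    using assms(7) by blast
  have "p \<in> cone_points n"
    using p(1) proj_closed_subset_cone_points[OF assms(3)] by blast
  then have "p i = 0" if "i \<noteq> l" for i
    using p assms(5,6) that unfolding cone_points_def
    by (cases "i < l"; cases "i \<le> n") auto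
  then have axis_Y: "\<forall>f\<in>van_ideal n Y. \<forall>d. Poly_Mapping.lookup f (Poly_Mapping.single l d) = 0"
    and axis_Z: "\<forall>f\<in>van_ideal n Z. \<forall>d. Poly_Mapping.lookup f (Poly_Mapping.single l d) = 0"
    using van_ideal_axis_coeff_eq_0[OF infinite_UNIV_char_0] assms(3,4) p by blast+
  have Y_off: "\<forall>v\<in>Y. \<forall>i\<in>{0..n} - {l..n}. v i = 0"
    and Z_off: "\<forall>v\<in>Z. \<forall>i\<in>{0..n} - {0..l}. v i = 0"
    using assms(5,6) by auto
  have split: "{l..n} \<union> {0..l} = {0..n}" "{l..n} \<inter> {0..l} = {l}"
    using assms(2) by auto
  show ?thesis
    by (rule std_monos_van_ideal_Int[OF assms(8) split Y_off Z_off axis_Y axis_Z])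
qed

end
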